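(* Let $L$ be a shift and $\mu$ a $\sigma$-invariant, nonatomic, regular Borel probability measure on $L$ that is positive on nonempty cylinders. Then the image measure $(\phi_\mu)_*\mu$ is Lebesgue measure on $[0,1]$, and $T_L$ preserves Lebesgue measure on $[0,1]$.
   Context: $A$ is a finite totally ordered alphabet. $A^{\mathbb N}$ has the lexicographic order and the Cantor topology, and $\sigma$ deletes the first letter. A shift is a closed $L\subseteq A^{\mathbb N}$ with $\sigma(L)\subseteq L$. For $w\le w'$ in $L$, $[w,w']=\{w''\in L:w\le w''\le w'\}$, and $w_{L,min}=\min L$. Construction. Put $\phi_\mu(w)=\mu([w_{L,min},w])$. Let $Z_0$ be the set of $x\in[0,1]$ with $|\phi_\mu^{-1}(x)|\ge 2$; each such preimage consists of exactly two consecutive words. Let $\hat I=[0,1]\sqcup Z_0^-$, where $Z_0^-=\{z^-:z\in Z_0\}$ is a disjoint copy of $Z_0$. Order $\hat I$ so that $z^-<z$ with nothing in between, extending the order of $[0,1]$, and give it the order topology. Let $\iota$ be the inclusion $[0,1]\to\hat I$, and let $\kappa:\hat I\to[0,1]$ be the identity on $[0,1]$ with $z^-\mapsto z$. Define $\phi(w)=(\phi_\mu(w))^-$ if $\phi_\mu^{-1}(\phi_\mu(w))=\{w,w'\}$ with $w<w'$, and $\phi(w)=\phi_\mu(w)$ otherwise. Set $\hat T=\phi\circ\sigma\circ\phi^{-1}$ and $T_L=\kappa\circ\hat T\circ\iota:[0,1]\to[0,1]$. *)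

theory Defs
  imports "HOL-Probability.Probability"
begin

definition shift_map :: "(nat \<Rightarrow> 'a) \<Rightarrow> (nat \<Rightarrow> 'a)" where
  "shift_map w = (\<lambda>n. w (Suc n))"

definition cyl :: "'a list \<Rightarrow> (nat \<Rightarrow> 'a) set" where
  "cyl u = {w. \<forall>i<length u. w i = u ! i}"

definition cantor_top :: "(nat \<Rightarrow> 'a) topology" where
  "cantor_top = topology_generated_by (range cyl)"

definition lex_less :: "(nat \<Rightarrow> 'a::linorder) \<Rightarrow> (nat \<Rightarrow> 'a) \<Rightarrow> bool" where
  "lex_less w w' \<longleftrightarrow> (\<exists>n. (\<forall>i<n. w i = w' i) \<and> w n < w' n)"

definition lex_le :: "(nat \<Rightarrow> 'a::linorder) \<Rightarrow> (nat \<Rightarrow> 'a) \<Rightarrow> bool" where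
  "lex_le w w' \<longleftrightarrow> w = w' \<or> lex_less w w'"

definition is_shift :: "(nat \<Rightarrow> 'a) set \<Rightarrow> bool" where
  "is_shift L \<longleftrightarrow> closedin cantor_top L \<and> shift_map ` L \<subseteq> L"

definition lex_interval :: "(nat \<Rightarrow> 'a::linorder) set \<Rightarrow> (nat \<Rightarrow> 'a) \<Rightarrow> (nat \<Rightarrow> 'a) \<Rightarrow> (nat \<Rightarrow> 'a) set" where
  "lex_interval L w w' = {v \<in> L. lex_le w v \<and> lex_le v w'}"

definition wmin :: "(nat \<Rightarrow> 'a::linorder) set \<Rightarrow> (nat \<Rightarrow> 'a)" where
  "wmin L = (THE w. w \<in> L \<and> (\<forall>v\<in>L. lex_le w v))"

definition regular_measure :: "'b topology \<Rightarrow> 'b measure \<Rightarrow> bool" where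
  "regular_measure T M \<longleftrightarrow> (\<forall>B\<in>sets M.
     emeasure M B = (SUP K\<in>{K. compactin T K \<and> K \<subseteq> B}. emeasure M K) \<and>
     emeasure M B = (INF U\<in>{U. openin T U \<and> B \<subseteq> U}. emeasure M U))"

definition phi_mu :: "(nat \<Rightarrow> 'a::linorder) set \<Rightarrow> (nat \<Rightarrow> 'a) measure \<Rightarrow> (nat \<Rightarrow> 'a) \<Rightarrow> real" where
  "phi_mu L \<mu> w = measure \<mu> (lex_interval L (wmin L) w)"

definition Z0 :: "(nat \<Rightarrow> 'a::linorder) set \<Rightarrow> (nat \<Rightarrow> 'a) measure \<Rightarrow> real set" where
  "Z0 L \<mu> = {x \<in> {0..1}. \<exists>w\<in>L. \<exists>w'\<in>L. w \<noteq> w' \<and> phi_mu L \<mu> w = x \<and> phi_mu L \<mu> w' = x}"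

text \<open>\<open>\<hat>I\<close> modelled as a subset of real \<times> bool: (x, True) is x in [0,1],
  (z, False) is the extra point z^- for z \<in> Z_0 (and (z,False) < (z,True)).\<close>
definition Ihat :: "(nat \<Rightarrow> 'a::linorder) set \<Rightarrow> (nat \<Rightarrow> 'a) measure \<Rightarrow> (real \<times> bool) set" where
  "Ihat L \<mu> = {(x, True) | x. x \<in> {0..1}} \<union> {(z, False) | z. z \<in> Z0 L \<mu>}"

definition iota :: "real \<Rightarrow> real \<times> bool" where
  "iota x = (x, True)"

definition kappa :: "real \<times> bool \<Rightarrow> real" where
  "kappa p = fst p"

definition phi_hat :: "(nat \<Rightarrow> 'a::linorder) set \<Rightarrow> (nat \<Rightarrow> 'a) measure \<Rightarrow> (nat \<Rightarrow> 'a) \<Rightarrow> real \<times> bool" where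
  "phi_hat L \<mu> w =
     (if \<exists>w'. {v \<in> L. phi_mu L \<mu> v = phi_mu L \<mu> w} = {w, w'} \<and> lex_less w w'
      then (phi_mu L \<mu> w, False) else (phi_mu L \<mu> w, True))"

definition T_hat :: "(nat \<Rightarrow> 'a::linorder) set \<Rightarrow> (nat \<Rightarrow> 'a) measure \<Rightarrow> real \<times> bool \<Rightarrow> real \<times> bool" where
  "T_hat L \<mu> = phi_hat L \<mu> \<circ> shift_map \<circ> inv_into L (phi_hat L \<mu>)"

definition T_L :: "(nat \<Rightarrow> 'a::linorder) set \<Rightarrow> (nat \<Rightarrow> 'a) measure \<Rightarrow> real \<Rightarrow> real" where
  "T_L L \<mu> = kappa \<circ> T_hat L \<mu> \<circ> iota"

end

theory Submission
  imports Defs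
begin

text \<open>
  The map \<open>\<phi> = phi_mu L \<mu>\<close> is monotone for the lexicographic order, continuous because \<open>\<mu>\<close>
  has no atoms, and strictly increasing across every word of \<open>L\<close> because \<open>\<mu>\<close> charges every
  cylinder. Hence for \<open>x \<in> [0,1]\<close> the lexicographic supremum \<open>w\<close> of \<open>{\<phi> \<le> x}\<close> (which lies
  in the closed set \<open>L\<close>) satisfies \<open>\<phi> w = x\<close> and \<open>{\<phi> \<le> x} = [wmin L, w]\<close>, a set of measure
  \<open>x\<close>: the image of \<open>\<mu>\<close> has the uniform distribution function. Two words have the same
  \<open>\<phi>\<close>-value only if they bound a gap of \<open>L\<close>, so outside a countable null set \<open>\<phi>\<close> is inverted
  by \<open>x \<mapsto> inv_into L (phi_hat L \<mu>) (x, True)\<close> and conjugates the shift to \<open>T_L\<close>; the shift-invariance of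
  \<open>\<mu>\<close> thus becomes the invariance of Lebesgue measure under \<open>T_L\<close>.
\<close>

lemma lex_less_trans: "lex_less u v \<Longrightarrow> lex_less v w \<Longrightarrow> lex_less u w"
  unfolding lex_less_def
  by (metis (no_types, opaque_lifting) less_trans nat_neq_iff order.strict_trans)

lemma lex_less_irrefl: "\<not> lex_less w w"
  by (auto simp: lex_less_def)

lemma lex_less_total:
  assumes "u \<noteq> v"
  shows "lex_less u v \<or> lex_less v u"
proof -
  define n where "n = (LEAST i. u i \<noteq> v i)"
  have "u n \<noteq> v n"
    unfolding n_def by (rule LeastI_ex) (use assms in auto)
  moreover have "\<forall>i<n. u i = v i"
    unfolding n_def using not_less_Least by blast
  ultimately show ?thesis
    unfolding lex_less_def by (metis linorder_neqE)
qed

interpretation lex: linorder lex_le lex_less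
proof
  fix u v w :: "nat \<Rightarrow> 'a"
  show "lex_less u v \<longleftrightarrow> lex_le u v \<and> \<not> lex_le v u"
    unfolding lex_le_def using lex_less_trans lex_less_irrefl by blast
  show "lex_le u u"
    by (simp add: lex_le_def)
  show "lex_le u v \<Longrightarrow> lex_le v w \<Longrightarrow> lex_le u w"
    unfolding lex_le_def using lex_less_trans by blast
  show "lex_le u v \<Longrightarrow> lex_le v u \<Longrightarrow> u = v"
    unfolding lex_le_def using lex_less_trans lex_less_irrefl by blast
  show "lex_le u v \<or> lex_le v u"
    unfolding lex_le_def using lex_less_total by blast
qed

lemma lex_between_common_prefix:
  assumes "\<forall>i<n. u i = w i" "lex_le u v" "lex_le v w"
  shows "\<forall>i<n. v i = w i"
proof (rule ccontr)
  assume "\<not> (\<forall>i<n. v i = w i)"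
  then obtain j where j: "j < n" "v j \<noteq> w j" by blast
  define k where "k = (LEAST i. v i \<noteq> w i)"
  have k: "v k \<noteq> w k" "k < n"
    using LeastI[of "\<lambda>i. v i \<noteq> w i", OF j(2)] Least_le[of "\<lambda>i. v i \<noteq> w i", OF j(2)] j(1)
    unfolding k_def by simp_all
  have below: "\<forall>i<k. v i = w i"
    unfolding k_def using not_less_Least by blast
  show False
  proof (cases "v k < w k")
    case True
    then have "lex_less v u"
      unfolding lex_less_def using below k assms(1) by (intro exI[of _ k]) auto
    then show False using assms(2) lex.leD by blast
  next
    case False
    then have "lex_less w v"
      unfolding lex_less_def using below k by (intro exI[of _ k]) auto
    then show False using assms(3) lex.leD by blast
  qed
qed

subsection \<open>Cylinders and the Cantor topology\<close>

definition word_prefix :: "(nat \<Rightarrow> 'a) \<Rightarrow> nat \<Rightarrow> 'a list" where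
  "word_prefix w n = map w [0..<n]"

lemma length_word_prefix [simp]: "length (word_prefix w n) = n"
  by (simp add: word_prefix_def)

lemma mem_cyl_word_prefix: "v \<in> cyl (word_prefix w n) \<longleftrightarrow> (\<forall>i<n. v i = w i)"
  by (simp add: cyl_def word_prefix_def)

lemma Inter_cyl_word_prefix: "(\<Inter>n. L \<inter> cyl (word_prefix w n)) = {w} \<inter> L"
  by (auto simp: mem_cyl_word_prefix fun_eq_iff) (use lessI in blast)

lemma cyl_snoc: "v \<in> cyl (u @ [a]) \<longleftrightarrow> v \<in> cyl u \<and> v (length u) = a"
  by (auto simp: cyl_def nth_append less_Suc_eq)

lemma openin_cyl: "openin cantor_top (cyl u)"
  by (simp add: cantor_top_def openin_topology_generated_by_iff generate_topology_on.Basis)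

lemma openin_cantor_top_cyl_subset:
  assumes "openin cantor_top U" "w \<in> U"
  shows "\<exists>n. cyl (word_prefix w n) \<subseteq> U"
proof -
  have "generate_topology_on (range cyl) U"
    using assms(1) by (simp add: cantor_top_def openin_topology_generated_by_iff)
  then show ?thesis
    using assms(2)
  proof (induction arbitrary: w)
    case (Int a b)
    then obtain n m where "cyl (word_prefix w n) \<subseteq> a" "cyl (word_prefix w m) \<subseteq> b"
      by blast
    then have "cyl (word_prefix w (max n m)) \<subseteq> a \<inter> b"
      by (auto simp: mem_cyl_word_prefix subset_iff)
    then show ?case by blast
  next
    case (Basis s)
    then obtain u where "s = cyl u" by blast
    then have "cyl (word_prefix w (length u)) \<subseteq> s"
      using Basis(2) by (auto simp: cyl_def word_prefix_def)
    then show ?case by blast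
  next
    case (UN K)
    then obtain k n where "k \<in> K" "cyl (word_prefix w n) \<subseteq> k" by blast
    then show ?case by blast
  qed auto
qed

lemma openin_cantor_topI:
  assumes "\<And>w. w \<in> U \<Longrightarrow> \<exists>n. cyl (word_prefix w n) \<subseteq> U"
  shows "openin cantor_top U"
proof -
  have "U = (\<Union>u\<in>{u. cyl u \<subseteq> U}. cyl u)"
  proof
    show "U \<subseteq> (\<Union>u\<in>{u. cyl u \<subseteq> U}. cyl u)"
    proof
      fix w assume "w \<in> U"
      then obtain n where "cyl (word_prefix w n) \<subseteq> U"
        using assms by blast
      moreover have "w \<in> cyl (word_prefix w n)"
        by (simp add: mem_cyl_word_prefix)
      ultimately show "w \<in> (\<Union>u\<in>{u. cyl u \<subseteq> U}. cyl u)" by blast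
    qed
  qed blast
  moreover have "openin cantor_top (\<Union>u\<in>{u. cyl u \<subseteq> U}. cyl u)"
    by (auto intro: openin_cyl)
  ultimately show ?thesis by simp
qed

lemma topspace_cantor_top [simp]: "topspace cantor_top = UNIV"
  using openin_subset[OF openin_cyl[of "[]"]] by (auto simp: cyl_def)

lemma closedin_cantor_top_adherent:
  assumes "closedin cantor_top L" "\<And>n. \<exists>v\<in>L. \<forall>i<n. v i = w i"
  shows "w \<in> L"
proof (rule ccontr)
  assume "w \<notin> L"
  moreover have "openin cantor_top (- L)"
    using assms(1) by (simp add: closedin_def Compl_eq_Diff_UNIV)
  ultimately obtain n where "cyl (word_prefix w n) \<subseteq> - L"
    using openin_cantor_top_cyl_subset by blast
  then show False
    using assms(2)[of n] mem_cyl_word_prefix by blast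
qed

lemma openin_lex_greater: "openin cantor_top {v. lex_less w v}"
proof (rule openin_cantor_topI)
  fix v assume "v \<in> {v. lex_less w v}"
  then obtain n where n: "\<forall>i<n. w i = v i" "w n < v n"
    by (auto simp: lex_less_def)
  then have "cyl (word_prefix v (Suc n)) \<subseteq> {v. lex_less w v}"
    unfolding lex_less_def by (auto simp: mem_cyl_word_prefix intro!: exI[of _ n])
  then show "\<exists>n. cyl (word_prefix v n) \<subseteq> {v. lex_less w v}" by blast
qed

lemma openin_lex_less: "openin cantor_top {v. lex_less v w}"
proof (rule openin_cantor_topI)
  fix v assume "v \<in> {v. lex_less v w}"
  then obtain n where n: "\<forall>i<n. v i = w i" "v n < w n"
    by (auto simp: lex_less_def)
  then have "cyl (word_prefix v (Suc n)) \<subseteq> {v. lex_less v w}"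
    unfolding lex_less_def by (auto simp: mem_cyl_word_prefix intro!: exI[of _ n])
  then show "\<exists>n. cyl (word_prefix v n) \<subseteq> {v. lex_less v w}" by blast
qed

lemma lex_le_if_adherent:
  assumes "\<And>v. v \<in> A \<Longrightarrow> lex_le w v" "\<And>n. \<exists>v\<in>A. \<forall>i<n. v i = t i"
  shows "lex_le w t"
proof -
  have "closedin cantor_top {v. lex_le w v}"
    using openin_lex_less[of w] by (simp add: closedin_def lex.not_le[symmetric] Compl_eq_Diff_UNIV Collect_neg_eq)
  moreover have "\<exists>v\<in>{v. lex_le w v}. \<forall>i<n. v i = t i" for n
    using assms by blast
  ultimately have "t \<in> {v. lex_le w v}"
    by (rule closedin_cantor_top_adherent)
  then show ?thesis
    by simp
qed

lemma openin_cantor_top_shift_vimage: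
  assumes "openin cantor_top V"
  shows "openin cantor_top (shift_map -` V)"
proof (rule openin_cantor_topI)
  fix w assume "w \<in> shift_map -` V"
  then obtain n where "cyl (word_prefix (shift_map w) n) \<subseteq> V"
    using openin_cantor_top_cyl_subset[OF assms] by blast
  then have "cyl (word_prefix w (Suc n)) \<subseteq> shift_map -` V"
    by (auto simp: mem_cyl_word_prefix shift_map_def subset_iff)
  then show "\<exists>n. cyl (word_prefix w n) \<subseteq> shift_map -` V" by blast
qed

definition next_letters :: "(nat \<Rightarrow> 'a) set \<Rightarrow> 'a list \<Rightarrow> 'a set" where
  "next_letters S u = {a. \<exists>v\<in>S. v \<in> cyl (u @ [a])}"

primrec greedy_prefix :: "('a set \<Rightarrow> 'a) \<Rightarrow> (nat \<Rightarrow> 'a) set \<Rightarrow> nat \<Rightarrow> 'a list" where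
  "greedy_prefix sel S 0 = []"
| "greedy_prefix sel S (Suc n) =
     greedy_prefix sel S n @ [sel (next_letters S (greedy_prefix sel S n))]"

definition greedy_word :: "('a set \<Rightarrow> 'a) \<Rightarrow> (nat \<Rightarrow> 'a) set \<Rightarrow> nat \<Rightarrow> 'a" where
  "greedy_word sel S n = sel (next_letters S (greedy_prefix sel S n))"

definition lex_sup :: "(nat \<Rightarrow> 'a::{linorder,finite}) set \<Rightarrow> nat \<Rightarrow> 'a" where
  "lex_sup = greedy_word Max"

definition lex_inf :: "(nat \<Rightarrow> 'a::{linorder,finite}) set \<Rightarrow> nat \<Rightarrow> 'a" where
  "lex_inf = greedy_word Min"

lemma word_prefix_greedy_word: "word_prefix (greedy_word sel S) n = greedy_prefix sel S n"
  by (induction n) (simp_all add: word_prefix_def greedy_word_def)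

lemma greedy_word_adherent:
  assumes "S \<noteq> {}" "\<And>A. A \<noteq> {} \<Longrightarrow> sel A \<in> A"
  shows "\<exists>v\<in>S. \<forall>i<n. v i = greedy_word sel S i"
proof -
  have "\<exists>v\<in>S. v \<in> cyl (greedy_prefix sel S n)"
  proof (induction n)
    case 0
    then show ?case using assms(1) by (auto simp: cyl_def)
  next
    case (Suc n)
    then obtain v where "v \<in> S" "v \<in> cyl (greedy_prefix sel S n)" by blast
    then have "next_letters S (greedy_prefix sel S n) \<noteq> {}"
      by (auto simp: next_letters_def cyl_snoc)
    then have "sel (next_letters S (greedy_prefix sel S n)) \<in> next_letters S (greedy_prefix sel S n)"
      by (rule assms(2))
    then show ?case
      by (auto simp: next_letters_def)
  qed
  then show ?thesis
    by (simp flip: word_prefix_greedy_word add: mem_cyl_word_prefix)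
qed

lemma lex_sup_adherent: "S \<noteq> {} \<Longrightarrow> \<exists>v\<in>S. \<forall>i<n. v i = lex_sup S i"
  unfolding lex_sup_def by (rule greedy_word_adherent) auto

lemma lex_inf_adherent: "S \<noteq> {} \<Longrightarrow> \<exists>v\<in>S. \<forall>i<n. v i = lex_inf S i"
  unfolding lex_inf_def by (rule greedy_word_adherent) auto

lemma lex_sup_upper: "v \<in> S \<Longrightarrow> lex_le v (lex_sup S)"
proof (rule ccontr)
  assume "v \<in> S" "\<not> lex_le v (lex_sup S)"
  then obtain n where n: "\<forall>i<n. lex_sup S i = v i" "lex_sup S n < v n"
    by (auto simp: lex.not_le lex_less_def)
  then have "v n \<in> next_letters S (word_prefix (lex_sup S) n)"
    using \<open>v \<in> S\<close> by (auto simp: next_letters_def cyl_snoc mem_cyl_word_prefix)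
  then have "v n \<le> lex_sup S n"
    by (simp add: lex_sup_def greedy_word_def word_prefix_greedy_word)
  then show False using n(2) by simp
qed

lemma lex_inf_lower: "v \<in> S \<Longrightarrow> lex_le (lex_inf S) v"
proof (rule ccontr)
  assume "v \<in> S" "\<not> lex_le (lex_inf S) v"
  then obtain n where n: "\<forall>i<n. v i = lex_inf S i" "v n < lex_inf S n"
    by (auto simp: lex.not_le lex_less_def)
  then have "v n \<in> next_letters S (word_prefix (lex_inf S) n)"
    using \<open>v \<in> S\<close> by (auto simp: next_letters_def cyl_snoc mem_cyl_word_prefix)
  then have "lex_inf S n \<le> v n"
    by (simp add: lex_inf_def greedy_word_def word_prefix_greedy_word)
  then show False using n(2) by simp
qed

subsection \<open>The distribution function of a measure on a closed set of words\<close>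

abbreviation lebesgue_01 :: "real measure" where
  "lebesgue_01 \<equiv> restrict_space lborel {0..1}"

lemma sets_lebesgue_01_iff: "A \<in> sets lebesgue_01 \<longleftrightarrow> A \<subseteq> {0..1} \<and> A \<in> sets borel"
  by (subst sets_restrict_space_iff) auto

locale lex_measure =
  fixes L :: "(nat \<Rightarrow> 'a::{linorder,finite}) set"
    and \<mu> :: "(nat \<Rightarrow> 'a) measure"
  assumes closed: "closedin cantor_top L"
    and space: "space \<mu> = L"
    and borel: "sets \<mu> = sigma_sets L {U. openin (subtopology cantor_top L) U}"
    and prob: "prob_space \<mu>"
    and nonatomic: "\<forall>w\<in>L. emeasure \<mu> {w} = 0"
    and pos_cyl: "\<forall>u. L \<inter> cyl u \<noteq> {} \<longrightarrow> emeasure \<mu> (L \<inter> cyl u) > 0"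
begin

sublocale P: prob_space \<mu>
  by (rule prob)

abbreviation \<phi> :: "(nat \<Rightarrow> 'a) \<Rightarrow> real" where
  "\<phi> \<equiv> phi_mu L \<mu>"

definition lex_atMost :: "(nat \<Rightarrow> 'a) \<Rightarrow> (nat \<Rightarrow> 'a) set" where
  "lex_atMost w = {v\<in>L. lex_le v w}"

lemma mem_L_if_adherent:
  assumes "A \<subseteq> L" "\<And>n. \<exists>v\<in>A. \<forall>i<n. v i = w i"
  shows "w \<in> L"
  by (rule closedin_cantor_top_adherent[OF closed]) (use assms in blast)

lemma sets_openin: "openin cantor_top V \<Longrightarrow> V \<inter> L \<in> sets \<mu>"
  unfolding borel by (rule sigma_sets.Basic) (auto simp: openin_subtopology)

lemma sets_cyl: "L \<inter> cyl u \<in> sets \<mu>"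
  using sets_openin[OF openin_cyl[of u]] by (simp add: Int_commute)

lemma sets_singleton: "{w} \<inter> L \<in> sets \<mu>"
  unfolding Inter_cyl_word_prefix[symmetric] using sets_cyl by (intro sets.countable_INT') auto

lemma measure_singleton: "measure \<mu> ({w} \<inter> L) = 0"
  using nonatomic by (cases "w \<in> L") (auto simp: measure_def)

lemma sets_lex_atMost: "lex_atMost w \<in> sets \<mu>"
proof -
  have "lex_atMost w = space \<mu> - {v. lex_less w v} \<inter> L"
    by (auto simp: lex_atMost_def space lex.not_less[symmetric])
  then show ?thesis
    using sets_openin[OF openin_lex_greater] by auto
qed

lemma wmin_least: "wmin L \<in> L" "\<And>v. v \<in> L \<Longrightarrow> lex_le (wmin L) v"
proof -
  have "L \<noteq> {}"
    using P.not_empty space by simp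
  then have inf: "lex_inf L \<in> L \<and> (\<forall>v\<in>L. lex_le (lex_inf L) v)"
    using mem_L_if_adherent[of L] lex_inf_adherent lex_inf_lower by blast
  have "wmin L = lex_inf L"
    unfolding wmin_def
  proof (rule the_equality)
    show "lex_inf L \<in> L \<and> (\<forall>v\<in>L. lex_le (lex_inf L) v)"
      by (rule inf)
    show "w = lex_inf L" if "w \<in> L \<and> (\<forall>v\<in>L. lex_le w v)" for w
      using that inf lex.order_antisym by blast
  qed
  then show "wmin L \<in> L" "\<And>v. v \<in> L \<Longrightarrow> lex_le (wmin L) v"
    using inf by auto
qed

lemma phi_eq_measure: "\<phi> w = measure \<mu> (lex_atMost w)"
proof -
  have "lex_interval L (wmin L) w = lex_atMost w"
    using wmin_least by (auto simp: lex_interval_def lex_atMost_def)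
  then show ?thesis
    by (simp add: phi_mu_def)
qed

lemma phi_nonneg: "0 \<le> \<phi> w"
  by (simp add: phi_eq_measure)

lemma phi_le_one: "\<phi> w \<le> 1"
  by (simp add: phi_eq_measure)

lemma phi_mono: "lex_le v w \<Longrightarrow> \<phi> v \<le> \<phi> w"
  unfolding phi_eq_measure
  by (intro P.finite_measure_mono sets_lex_atMost) (auto simp: lex_atMost_def)

lemma phi_diff: "lex_le v w \<Longrightarrow> \<phi> w - \<phi> v = measure \<mu> (lex_atMost w - lex_atMost v)"
  unfolding phi_eq_measure using sets_lex_atMost
  by (subst P.finite_measure_Diff) (auto simp: lex_atMost_def)

lemma phi_eq_one:
  assumes "\<And>v. v \<in> L \<Longrightarrow> lex_le v w"
  shows "\<phi> w = 1"
proof -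
  have "lex_atMost w = space \<mu>"
    using assms by (auto simp: lex_atMost_def space)
  then show ?thesis
    by (simp add: phi_eq_measure P.prob_space)
qed

lemma phi_wmin: "\<phi> (wmin L) = 0"
proof -
  have "lex_atMost (wmin L) = {wmin L} \<inter> L"
    using wmin_least lex.order_antisym by (auto simp: lex_atMost_def)
  then show ?thesis
    by (simp add: phi_eq_measure measure_singleton)
qed

lemma phi_diff_le_measure_cyl:
  assumes "\<forall>i<n. v i = w i"
  shows "\<bar>\<phi> v - \<phi> w\<bar> \<le> measure \<mu> (L \<inter> cyl (word_prefix w n))"
proof -
  have one_sided: "\<phi> y - \<phi> x \<le> measure \<mu> (L \<inter> cyl (word_prefix y n))"
    if "lex_le x y" "\<forall>i<n. x i = y i" for x y
  proof -
    have "lex_atMost y - lex_atMost x \<subseteq> L \<inter> cyl (word_prefix y n)"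
    proof
      fix u assume "u \<in> lex_atMost y - lex_atMost x"
      then have "u \<in> L" "lex_le x u" "lex_le u y"
        by (auto simp: lex_atMost_def lex.not_le lex.less_imp_le)
      then show "u \<in> L \<inter> cyl (word_prefix y n)"
        using lex_between_common_prefix[OF that(2)] by (simp add: mem_cyl_word_prefix)
    qed
    then show ?thesis
      using phi_diff[OF that(1)] by (simp add: P.finite_measure_mono sets_cyl)
  qed
  show ?thesis
  proof (cases "lex_le v w")
    case True
    then show ?thesis
      using one_sided[OF True assms] phi_mono[OF True] by simp
  next
    case False
    then have "lex_le w v"
      using lex.linear by blast
    moreover have "word_prefix v n = word_prefix w n"
      using assms by (simp add: word_prefix_def)
    ultimately show ?thesis
      using one_sided[of w v] assms phi_mono[of w v] by simp
  qed
qed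

lemma tendsto_measure_cyl_word_prefix:
  assumes "w \<in> L"
  shows "(\<lambda>n. measure \<mu> (L \<inter> cyl (word_prefix w n))) \<longlonglongrightarrow> 0"
proof -
  have "(\<lambda>n. measure \<mu> (L \<inter> cyl (word_prefix w n))) \<longlonglongrightarrow> measure \<mu> (\<Inter>n. L \<inter> cyl (word_prefix w n))"
    by (rule P.finite_Lim_measure_decseq) (auto simp: sets_cyl decseq_def mem_cyl_word_prefix)
  then show ?thesis
    by (simp only: Inter_cyl_word_prefix measure_singleton)
qed

lemma phi_in_closure_image:
  assumes "w \<in> L" "\<And>n. \<exists>v\<in>A. \<forall>i<n. v i = w i"
  shows "\<phi> w \<in> closure (\<phi> ` A)"
proof -
  have "\<forall>n. \<exists>v. v \<in> A \<and> (\<forall>i<n. v i = w i)"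
    using assms(2) by blast
  from choice[OF this] obtain f where f: "\<And>n. f n \<in> A" "\<And>n. \<forall>i<n. f n i = w i"
    by blast
  have "(\<lambda>n. \<phi> (f n) - \<phi> w) \<longlonglongrightarrow> 0"
  proof (rule Lim_null_comparison)
    show "\<forall>\<^sub>F n in sequentially. norm (\<phi> (f n) - \<phi> w) \<le> measure \<mu> (L \<inter> cyl (word_prefix w n))"
      using phi_diff_le_measure_cyl[OF f(2)] by (simp add: always_eventually)
  qed (rule tendsto_measure_cyl_word_prefix[OF assms(1)])
  then have "(\<lambda>n. \<phi> (f n)) \<longlonglongrightarrow> \<phi> w"
    by (rule LIM_zero_cancel)
  moreover have "\<And>n. \<phi> (f n) \<in> \<phi> ` A"
    using f(1) by blast
  ultimately show ?thesis
    unfolding closure_sequential by (intro exI[of _ "\<lambda>n. \<phi> (f n)"]) simp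
qed

lemma phi_less_between:
  assumes "v \<in> L" "lex_less u v" "lex_less v w"
  shows "\<phi> u < \<phi> w"
proof -
  obtain n where n: "\<forall>i<n. u i = v i" "u n < v n"
    using assms(2) by (auto simp: lex_less_def)
  obtain m where m: "\<forall>i<m. v i = w i" "v m < w m"
    using assms(3) by (auto simp: lex_less_def)
  define N where "N = Suc (max n m)"
  have "L \<inter> cyl (word_prefix v N) \<subseteq> lex_atMost w - lex_atMost u"
  proof
    fix x assume x: "x \<in> L \<inter> cyl (word_prefix v N)"
    then have "\<forall>i<N. x i = v i"
      by (simp add: mem_cyl_word_prefix)
    then have "lex_less u x"
      unfolding lex_less_def using n N_def by (intro exI[of _ n]) auto
    moreover have "lex_less x w"
      unfolding lex_less_def using m \<open>\<forall>i<N. x i = v i\<close> N_def by (intro exI[of _ m]) auto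
    ultimately show "x \<in> lex_atMost w - lex_atMost u"
      using x by (auto simp: lex_atMost_def lex.not_le lex.less_imp_le)
  qed
  then have "measure \<mu> (L \<inter> cyl (word_prefix v N)) \<le> \<phi> w - \<phi> u"
    using phi_diff[of u w] assms(2,3) sets_lex_atMost
    by (simp add: P.finite_measure_mono lex.less_imp_le)
  moreover have "0 < measure \<mu> (L \<inter> cyl (word_prefix v N))"
    using pos_cyl assms(1) unfolding P.emeasure_eq_measure
    by (metis (no_types) IntI emptyE ennreal_less_zero_iff mem_cyl_word_prefix)
  ultimately show ?thesis
    by simp
qed

lemma phi_fibre:
  assumes "u \<in> L" "w \<in> L" "lex_less u w" "\<phi> u = \<phi> w"
  shows "{v\<in>L. \<phi> v = \<phi> u} = {u, w}"
proof -
  have "v = u \<or> v = w" if "v \<in> L" "\<phi> v = \<phi> u" for v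
  proof (rule ccontr)
    assume "\<not> (v = u \<or> v = w)"
    then consider "lex_less v u" | "lex_less u v" "lex_less v w" | "lex_less w v"
      using lex.neq_iff by blast
    then show False
      using phi_less_between[OF assms(1), of v w] phi_less_between[OF that(1), of u w]
        phi_less_between[OF assms(2), of u v] that(2) assms(3,4)
      by cases auto
  qed
  then show ?thesis
    using assms by auto
qed


lemma phi_eq_successor:
  assumes "lex_le w t" "\<And>u. u \<in> L \<Longrightarrow> lex_less w u \<Longrightarrow> lex_le t u"
  shows "\<phi> w = \<phi> t"
proof -
  have "lex_atMost t - lex_atMost w \<subseteq> {t} \<inter> L"
  proof
    fix u assume "u \<in> lex_atMost t - lex_atMost w"
    then have "u \<in> L" "lex_less w u" "lex_le u t"
      by (auto simp: lex_atMost_def lex.not_le)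
    then show "u \<in> {t} \<inter> L"
      using assms(2) lex.order_antisym by blast
  qed
  then have "measure \<mu> (lex_atMost t - lex_atMost w) \<le> measure \<mu> ({t} \<inter> L)"
    by (rule P.finite_measure_mono) (rule sets_singleton)
  then show ?thesis
    using phi_diff[OF assms(1)] phi_mono[OF assms(1)] measure_singleton by simp
qed

lemma phi_in_closure_above:
  assumes "w \<in> L" "{v\<in>L. lex_less w v} \<noteq> {}"
  shows "\<phi> w \<in> closure (\<phi> ` {v\<in>L. lex_less w v})"
proof -
  define U where "U = {v\<in>L. lex_less w v}"
  define t where "t = lex_inf U"
  have t_adherent: "\<exists>v\<in>U. \<forall>i<n. v i = t i" for n
    unfolding t_def by (rule lex_inf_adherent) (use assms(2) U_def in auto)
  have "t \<in> L"
    by (rule mem_L_if_adherent[OF _ t_adherent]) (auto simp: U_def)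
  have "lex_le w t"
    by (rule lex_le_if_adherent[OF _ t_adherent]) (auto simp: U_def lex.less_imp_le)
  show ?thesis
  proof (cases "t = w")
    case True
    then have "\<exists>v\<in>U. \<forall>i<n. v i = w i" for n
      using t_adherent by simp
    then have "\<phi> w \<in> closure (\<phi> ` U)"
      by (rule phi_in_closure_image[OF assms(1)])
    then show ?thesis
      by (simp add: U_def)
  next
    case False
    then have "t \<in> U"
      using \<open>lex_le w t\<close> \<open>t \<in> L\<close> by (auto simp: U_def lex.le_less)
    have "\<phi> w = \<phi> t"
      by (rule phi_eq_successor[OF \<open>lex_le w t\<close>])
        (auto simp: t_def U_def intro: lex_inf_lower)
    then have "\<phi> w \<in> \<phi> ` U"
      using \<open>t \<in> U\<close> by (rule image_eqI)
    then show ?thesis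
      unfolding U_def by (rule closure_subset[THEN subsetD])
  qed
qed

lemma phi_level_greatest:
  assumes "0 \<le> x" "x \<le> 1"
  shows "\<exists>w\<in>L. \<phi> w = x \<and> (\<forall>v\<in>L. \<phi> v \<le> x \<longrightarrow> lex_le v w)"
proof -
  define S where "S = {v\<in>L. \<phi> v \<le> x}"
  define w where "w = lex_sup S"
  have "S \<noteq> {}"
    using wmin_least phi_wmin assms(1) by (auto simp: S_def)
  then have w_adherent: "\<exists>v\<in>S. \<forall>i<n. v i = w i" for n
    unfolding w_def by (rule lex_sup_adherent)
  then have "w \<in> L"
    by (rule mem_L_if_adherent[rotated]) (auto simp: S_def)
  have upper: "lex_le v w" if "v \<in> S" for v
    unfolding w_def using that by (rule lex_sup_upper)
  have "\<phi> w \<le> x"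
  proof -
    have "closure (\<phi> ` S) \<subseteq> {..x}"
      by (rule closure_minimal) (auto simp: S_def)
    then show ?thesis
      using phi_in_closure_image[OF \<open>w \<in> L\<close> w_adherent] by auto
  qed
  moreover have "x \<le> \<phi> w"
  proof (cases "{v\<in>L. lex_less w v} = {}")
    case True
    then have "lex_le v w" if "v \<in> L" for v
      using that lex.not_less by blast
    then show ?thesis
      using phi_eq_one[of w] assms(2) by simp
  next
    case False
    have "\<phi> ` {v\<in>L. lex_less w v} \<subseteq> {x..}"
      using upper lex.leD by (fastforce simp: S_def)
    then have "closure (\<phi> ` {v\<in>L. lex_less w v}) \<subseteq> {x..}"
      by (rule closure_minimal) simp
    then show ?thesis
      using phi_in_closure_above[OF \<open>w \<in> L\<close> False] by auto
  qed
  ultimately show ?thesis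
    using \<open>w \<in> L\<close> upper by (auto simp: S_def)
qed

lemma phi_atMost_eq_lex_atMost:
  assumes "0 \<le> x" "x \<le> 1"
  obtains w where "{v\<in>space \<mu>. \<phi> v \<le> x} = lex_atMost w" "\<phi> w = x"
proof -
  obtain w where "w \<in> L" "\<phi> w = x" "\<forall>v\<in>L. \<phi> v \<le> x \<longrightarrow> lex_le v w"
    using phi_level_greatest[OF assms] by blast
  then have "{v\<in>space \<mu>. \<phi> v \<le> x} = lex_atMost w"
    using phi_mono by (auto simp: lex_atMost_def space)
  then show ?thesis
    using that \<open>\<phi> w = x\<close> by blast
qed

lemma phi_measurable: "\<phi> \<in> borel_measurable \<mu>"
  unfolding borel_measurable_iff_le
proof
  fix x :: real
  consider "x < 0" | "1 \<le> x" | "0 \<le> x" "x \<le> 1"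
    by linarith
  then show "{v\<in>space \<mu>. \<phi> v \<le> x} \<in> sets \<mu>"
  proof cases
    case 1
    then have empty: "{v\<in>space \<mu>. \<phi> v \<le> x} = {}"
      by (auto dest: order.trans[OF phi_nonneg])
    show ?thesis
      unfolding empty by simp
  next
    case 2
    then have full: "{v\<in>space \<mu>. \<phi> v \<le> x} = space \<mu>"
      by (auto intro: order.trans[OF phi_le_one])
    show ?thesis
      unfolding full by simp
  next
    case 3
    then show ?thesis
      using sets_lex_atMost by (metis phi_atMost_eq_lex_atMost)
  qed
qed

lemma measure_phi_atMost: "measure \<mu> {v\<in>space \<mu>. \<phi> v \<le> x} = measure lborel ({0..1} \<inter> {..x})"
proof -
  consider "x < 0" | "1 \<le> x" | "0 \<le> x" "x \<le> 1"
    by linarith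
  then show ?thesis
  proof cases
    case 1
    then have "{v\<in>space \<mu>. \<phi> v \<le> x} = {}" "{0..1} \<inter> {..x} = {}"
      by (auto dest: order.trans[OF phi_nonneg])
    then show ?thesis
      by (simp only: measure_empty)
  next
    case 2
    then have "{v\<in>space \<mu>. \<phi> v \<le> x} = space \<mu>" "{0..1} \<inter> {..x} = {0..1}"
      by (auto intro: order.trans[OF phi_le_one])
    then show ?thesis
      by (simp only: P.prob_space measure_lborel_Icc)
  next
    case 3
    then obtain w where "{v\<in>space \<mu>. \<phi> v \<le> x} = lex_atMost w" "\<phi> w = x"
      by (rule phi_atMost_eq_lex_atMost)
    moreover have "{0..1} \<inter> {..x} = {0..x}"
      using 3 by auto
    ultimately show ?thesis
      using 3 by (simp add: phi_eq_measure)
  qed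
qed

lemma phi_measurable_lebesgue_01: "\<phi> \<in> measurable \<mu> lebesgue_01"
  by (intro measurable_restrict_space2) (auto simp: phi_nonneg phi_le_one phi_measurable)

lemma distr_phi: "distr \<mu> lebesgue_01 \<phi> = lebesgue_01"
proof -
  define N where "N = uniform_measure lborel {0..1::real}"
  have "real_distribution (distr \<mu> borel \<phi>)"
    by (rule P.real_distribution_distr) (simp add: phi_measurable)
  moreover have "real_distribution N"
    unfolding N_def real_distribution_def real_distribution_axioms_def
    by (auto intro!: prob_space_uniform_measure)
  moreover have "cdf (distr \<mu> borel \<phi>) = cdf N"
  proof
    fix x
    have "cdf (distr \<mu> borel \<phi>) x = measure \<mu> (\<phi> -` {..x} \<inter> space \<mu>)"
      unfolding cdf_def2 by (rule measure_distr) (auto simp: phi_measurable)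
    also have "\<dots> = measure lborel ({0..1} \<inter> {..x})"
      using measure_phi_atMost[of x] by (simp add: vimage_def Int_def conj_commute)
    also have "\<dots> = cdf N x"
      unfolding cdf_def2 N_def by (subst measure_uniform_measure) auto
    finally show "cdf (distr \<mu> borel \<phi>) x = cdf N x" .
  qed
  ultimately have N: "distr \<mu> borel \<phi> = N"
    by (rule cdf_unique)
  show ?thesis
  proof (rule measure_eqI)
    fix A assume "A \<in> sets (distr \<mu> lebesgue_01 \<phi>)"
    then have A: "A \<in> sets lebesgue_01" "A \<in> sets borel" "A \<subseteq> {0..1}"
      by (auto simp: sets_lebesgue_01_iff)
    have "emeasure (distr \<mu> lebesgue_01 \<phi>) A = emeasure (distr \<mu> borel \<phi>) A"
      using A by (simp add: emeasure_distr phi_measurable phi_measurable_lebesgue_01)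
    also have "\<dots> = emeasure lebesgue_01 A"
      using A unfolding N N_def
      by (simp add: emeasure_uniform_measure emeasure_restrict_space Int_absorb1 divide_ennreal_def)
    finally show "emeasure (distr \<mu> lebesgue_01 \<phi>) A = emeasure lebesgue_01 A" .
  qed simp
qed

lemma emeasure_lborel_eq_emeasure_vimage_phi:
  assumes "A \<in> sets lebesgue_01"
  shows "emeasure lborel A = emeasure \<mu> (\<phi> -` A \<inter> space \<mu>)"
proof -
  have "emeasure lborel A = emeasure lebesgue_01 A"
    using assms by (subst emeasure_restrict_space) (auto simp: sets_lebesgue_01_iff)
  also have "\<dots> = emeasure \<mu> (\<phi> -` A \<inter> space \<mu>)"
    by (subst distr_phi[symmetric]) (rule emeasure_distr[OF phi_measurable_lebesgue_01 assms])
  finally show ?thesis .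
qed

subsection \<open>Inverting \<open>\<phi>\<close> off a null set\<close>

definition phi_inv :: "real \<Rightarrow> nat \<Rightarrow> 'a" where
  "phi_inv x = inv_into L (phi_hat L \<mu>) (x, True)"

lemma fst_phi_hat: "fst (phi_hat L \<mu> w) = \<phi> w"
  by (simp add: phi_hat_def)

lemma phi_hat_fibre_greatest:
  assumes "\<forall>v\<in>L. \<phi> v = \<phi> w \<longrightarrow> lex_le v w"
  shows "phi_hat L \<mu> w = (\<phi> w, True)"
proof -
  have "\<not> (\<exists>w'. {v\<in>L. \<phi> v = \<phi> w} = {w, w'} \<and> lex_less w w')"
  proof
    assume "\<exists>w'. {v\<in>L. \<phi> v = \<phi> w} = {w, w'} \<and> lex_less w w'"
    then obtain w' where "w' \<in> L" "\<phi> w' = \<phi> w" "lex_less w w'"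
      by blast
    then show False
      using assms lex.leD by blast
  qed
  then show ?thesis
    unfolding phi_hat_def by (rule if_not_P)
qed

lemma phi_hat_True_imp_fibre_greatest:
  assumes "w \<in> L" "snd (phi_hat L \<mu> w)" "v \<in> L" "\<phi> v = \<phi> w"
  shows "lex_le v w"
proof (rule ccontr)
  assume "\<not> lex_le v w"
  then have "lex_less w v"
    by (simp add: lex.not_le)
  moreover from this have "{u\<in>L. \<phi> u = \<phi> w} = {w, v}"
    using phi_fibre[OF assms(1,3)] assms(4) by simp
  ultimately have "\<exists>w'. {u\<in>L. \<phi> u = \<phi> w} = {w, w'} \<and> lex_less w w'"
    by blast
  then have "phi_hat L \<mu> w = (\<phi> w, False)"
    unfolding phi_hat_def by (rule if_P)
  then show False
    using assms(2) by simp
qed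

lemma phi_inv_greatest:
  assumes "0 \<le> x" "x \<le> 1"
  shows "phi_inv x \<in> L" "\<phi> (phi_inv x) = x"
    and "\<And>v. v \<in> L \<Longrightarrow> \<phi> v \<le> x \<Longrightarrow> lex_le v (phi_inv x)"
proof -
  obtain w where w: "w \<in> L" "\<phi> w = x" "\<forall>v\<in>L. \<phi> v \<le> x \<longrightarrow> lex_le v w"
    using phi_level_greatest[OF assms] by blast
  then have "phi_hat L \<mu> w = (x, True)"
    using phi_hat_fibre_greatest[of w] by simp
  then have img: "(x, True) \<in> phi_hat L \<mu> ` L"
    using w(1) by (rule image_eqI[OF sym])
  have p: "phi_inv x \<in> L" "phi_hat L \<mu> (phi_inv x) = (x, True)"
    unfolding phi_inv_def by (rule inv_into_into[OF img], rule f_inv_into_f[OF img])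
  then have "\<phi> (phi_inv x) = x"
    using fst_phi_hat[of "phi_inv x"] by simp
  have "phi_inv x = w"
  proof (rule lex.order_antisym)
    show "lex_le (phi_inv x) w"
      using w(3) p(1) \<open>\<phi> (phi_inv x) = x\<close> by simp
    show "lex_le w (phi_inv x)"
      using phi_hat_True_imp_fibre_greatest[OF p(1) _ w(1)] p(2) w(2) \<open>\<phi> (phi_inv x) = x\<close>
      by simp
  qed
  then show "phi_inv x \<in> L" "\<phi> (phi_inv x) = x"
    and "\<And>v. v \<in> L \<Longrightarrow> \<phi> v \<le> x \<Longrightarrow> lex_le v (phi_inv x)"
    using w by auto
qed

lemma phi_inv_mono: "0 \<le> a \<Longrightarrow> a \<le> b \<Longrightarrow> b \<le> 1 \<Longrightarrow> lex_le (phi_inv a) (phi_inv b)"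
  using phi_inv_greatest[of a] phi_inv_greatest[of b] by simp

lemma is_interval_phi_inv_vimage_cyl: "is_interval {x\<in>{0..1}. phi_inv x \<in> cyl u}"
  unfolding is_interval_1
proof (intro ballI allI impI)
  fix a b c :: real
  assume ab: "a \<in> {x\<in>{0..1}. phi_inv x \<in> cyl u}" "b \<in> {x\<in>{0..1}. phi_inv x \<in> cyl u}"
    and c: "a \<le> c \<and> c \<le> b"
  then have "lex_le (phi_inv a) (phi_inv c)" "lex_le (phi_inv c) (phi_inv b)"
    by (auto intro: phi_inv_mono)
  moreover have "\<forall>i<length u. phi_inv a i = phi_inv b i"
    using ab by (auto simp: cyl_def)
  ultimately have "\<forall>i<length u. phi_inv c i = phi_inv b i"
    by (rule lex_between_common_prefix[rotated])
  then show "c \<in> {x\<in>{0..1}. phi_inv x \<in> cyl u}"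
    using ab c by (auto simp: cyl_def)
qed

lemma phi_inv_measurable: "phi_inv \<in> measurable lebesgue_01 \<mu>"
proof (rule measurable_sigma_sets[OF borel])
  show "{U. openin (subtopology cantor_top L) U} \<subseteq> Pow L"
    using openin_subset by fastforce
  show "phi_inv \<in> space lebesgue_01 \<rightarrow> L"
    using phi_inv_greatest by (auto simp: space_restrict_space)
  fix y assume "y \<in> {U. openin (subtopology cantor_top L) U}"
  then obtain V where V: "openin cantor_top V" "y = V \<inter> L"
    by (auto simp: openin_subtopology)
  \<comment> \<open>Open sets are countable unions of cylinders, which \<open>phi_inv\<close> pulls back to intervals.\<close>
  have "phi_inv x \<in> V \<longleftrightarrow> (\<exists>u. cyl u \<subseteq> V \<and> phi_inv x \<in> cyl u)" for x
    using openin_cantor_top_cyl_subset[OF V(1), of "phi_inv x"] mem_cyl_word_prefix by blast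
  then have "phi_inv -` y \<inter> space lebesgue_01 = (\<Union>u\<in>{u. cyl u \<subseteq> V}. {x\<in>{0..1}. phi_inv x \<in> cyl u})"
    using V(2) phi_inv_greatest(1) by (auto simp: space_restrict_space)
  moreover have "{x\<in>{0..1}. phi_inv x \<in> cyl u} \<in> sets lebesgue_01" for u
    using is_interval_phi_inv_vimage_cyl[of u]
    by (auto simp: sets_lebesgue_01_iff intro: real_interval_borel_measurable)
  ultimately show "phi_inv -` y \<inter> space lebesgue_01 \<in> sets lebesgue_01"
    by (auto intro: sets.countable_UN')
qed

lemma T_L_eq: "T_L L \<mu> x = \<phi> (shift_map (phi_inv x))"
  by (simp add: T_L_def T_hat_def kappa_def iota_def phi_inv_def fst_phi_hat)

text \<open>\<open>\<phi>\<close> identifies two words only when they bound a gap of \<open>L\<close>; the smaller one is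
  then the maximum of one of its own cylinders, and there are only countably many such maxima.\<close>

definition cyl_max :: "'a list \<Rightarrow> nat \<Rightarrow> 'a" where
  "cyl_max u = (THE w. w \<in> L \<inter> cyl u \<and> (\<forall>v\<in>L \<inter> cyl u. lex_le v w))"

definition cyl_maxima :: "(nat \<Rightarrow> 'a) set" where
  "cyl_maxima = (\<Union>u. {cyl_max u} \<inter> L)"

lemma cyl_max_eqI:
  assumes "w \<in> L \<inter> cyl u" "\<forall>v\<in>L \<inter> cyl u. lex_le v w"
  shows "cyl_max u = w"
  unfolding cyl_max_def
proof (rule the_equality)
  show "w \<in> L \<inter> cyl u \<and> (\<forall>v\<in>L \<inter> cyl u. lex_le v w)"
    using assms by blast
  show "y = w" if "y \<in> L \<inter> cyl u \<and> (\<forall>v\<in>L \<inter> cyl u. lex_le v y)" for y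
    using that assms lex.order_antisym by blast
qed

lemma cyl_maxima_null: "cyl_maxima \<in> null_sets \<mu>"
  unfolding cyl_maxima_def
  by (intro null_sets_UN) (simp add: null_sets_def sets_singleton P.emeasure_eq_measure measure_singleton)

lemma phi_inv_phi:
  assumes "w \<in> L" "w \<notin> cyl_maxima"
  shows "phi_inv (\<phi> w) = w"
proof (rule ccontr)
  define p where "p = phi_inv (\<phi> w)"
  have p: "p \<in> L" "\<phi> p = \<phi> w" "lex_le w p"
    using phi_inv_greatest[OF phi_nonneg phi_le_one] assms(1) by (auto simp: p_def)
  assume "phi_inv (\<phi> w) \<noteq> w"
  then have "p \<noteq> w"
    by (simp add: p_def)
  then have "lex_less w p"
    using p(3) by (simp add: lex.le_less)
  then obtain n where n: "\<forall>i<n. w i = p i" "w n < p n"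
    unfolding lex_less_def by blast
  \<comment> \<open>No word of \<open>L\<close> lies strictly between \<open>w\<close> and \<open>p\<close>.\<close>
  have "lex_le v w" if "v \<in> L \<inter> cyl (word_prefix w (Suc n))" for v
  proof (rule ccontr)
    assume "\<not> lex_le v w"
    then have "lex_less w v"
      by (simp add: lex.not_le)
    moreover have "lex_less v p"
      unfolding lex_less_def using that n by (intro exI[of _ n]) (auto simp: mem_cyl_word_prefix)
    ultimately have "\<phi> w < \<phi> p"
      using phi_less_between[of v w p] that by simp
    then show False
      using p(2) by simp
  qed
  then have "cyl_max (word_prefix w (Suc n)) = w"
    using assms(1) by (intro cyl_max_eqI) (auto simp: mem_cyl_word_prefix)
  then have "w \<in> {cyl_max (word_prefix w (Suc n))} \<inter> L"
    using assms(1) by simp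
  then have "w \<in> cyl_maxima"
    unfolding cyl_maxima_def by (rule UN_I[OF UNIV_I])
  then show False
    using assms(2) by contradiction
qed

lemma T_L_phi:
  assumes "w \<in> L" "w \<notin> cyl_maxima"
  shows "T_L L \<mu> (\<phi> w) = \<phi> (shift_map w)"
  by (simp add: T_L_eq phi_inv_phi[OF assms])

end

locale shift_invariant_measure = lex_measure +
  assumes shift_closed: "shift_map ` L \<subseteq> L"
    and invariant: "\<forall>B\<in>sets \<mu>. emeasure \<mu> (shift_map -` B \<inter> L) = emeasure \<mu> B"
begin

lemma shift_measurable: "shift_map \<in> measurable \<mu> \<mu>"
proof (rule measurable_sigma_sets[OF borel])
  show "{U. openin (subtopology cantor_top L) U} \<subseteq> Pow L"
    using openin_subset by fastforce
  show "shift_map \<in> space \<mu> \<rightarrow> L"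
    using shift_closed by (auto simp: space)
  fix y assume "y \<in> {U. openin (subtopology cantor_top L) U}"
  then obtain V where V: "openin cantor_top V" "y = V \<inter> L"
    by (auto simp: openin_subtopology)
  then have "shift_map -` y \<inter> space \<mu> = shift_map -` V \<inter> L"
    using shift_closed by (auto simp: space)
  then show "shift_map -` y \<inter> space \<mu> \<in> sets \<mu>"
    using sets_openin[OF openin_cantor_top_shift_vimage[OF V(1)]] by simp
qed

lemma T_L_measurable: "T_L L \<mu> \<in> measurable lebesgue_01 lebesgue_01"
  unfolding T_L_eq[abs_def]
  using measurable_comp[OF measurable_comp[OF phi_inv_measurable shift_measurable] phi_measurable_lebesgue_01]
  by (simp add: comp_def)

lemma T_L_preserves_lebesgue:
  assumes B: "B \<in> sets lebesgue_01"
  shows "emeasure lborel (T_L L \<mu> -` B \<inter> {0..1}) = emeasure lborel B"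
proof -
  define A where "A = T_L L \<mu> -` B \<inter> {0..1}"
  have A: "A \<in> sets lebesgue_01"
    using measurable_sets[OF T_L_measurable B] by (simp add: A_def space_restrict_space)
  have phi_sets: "\<phi> -` C \<inter> space \<mu> \<in> sets \<mu>" if "C \<in> sets lebesgue_01" for C
    by (rule measurable_sets[OF phi_measurable_lebesgue_01 that])
  define S where "S = shift_map -` (\<phi> -` B \<inter> space \<mu>) \<inter> L"
  have S: "S \<in> sets \<mu>"
    using measurable_sets[OF shift_measurable phi_sets[OF B]] by (simp add: S_def space)
  have "\<phi> -` A \<inter> space \<mu> - cyl_maxima = S - cyl_maxima"
  proof (rule set_eqI)
    fix w
    show "w \<in> \<phi> -` A \<inter> space \<mu> - cyl_maxima \<longleftrightarrow> w \<in> S - cyl_maxima"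
    proof (cases "w \<in> L \<and> w \<notin> cyl_maxima")
      case True
      then have "T_L L \<mu> (\<phi> w) = \<phi> (shift_map w)"
        by (simp add: T_L_phi)
      moreover have "shift_map w \<in> L"
        using True shift_closed by blast
      ultimately show ?thesis
        using True phi_nonneg[of w] phi_le_one[of w] by (simp add: A_def S_def space)
    qed (auto simp: S_def space)
  qed
  have "emeasure lborel A = emeasure \<mu> (\<phi> -` A \<inter> space \<mu>)"
    by (rule emeasure_lborel_eq_emeasure_vimage_phi[OF A])
  also have "\<dots> = emeasure \<mu> (\<phi> -` A \<inter> space \<mu> - cyl_maxima)"
    by (rule emeasure_Diff_null_set[OF cyl_maxima_null phi_sets[OF A], symmetric])
  also have "\<dots> = emeasure \<mu> (S - cyl_maxima)"
    by (simp only: \<open>\<phi> -` A \<inter> space \<mu> - cyl_maxima = S - cyl_maxima\<close>)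
  also have "\<dots> = emeasure \<mu> S"
    by (rule emeasure_Diff_null_set[OF cyl_maxima_null S])
  also have "\<dots> = emeasure \<mu> (\<phi> -` B \<inter> space \<mu>)"
    unfolding S_def by (rule bspec[OF invariant phi_sets[OF B]])
  also have "\<dots> = emeasure lborel B"
    by (rule emeasure_lborel_eq_emeasure_vimage_phi[OF B, symmetric])
  finally show ?thesis
    unfolding A_def .
qed

end

theorem mainTheorem8:
  fixes L :: "(nat \<Rightarrow> 'a::{linorder,finite}) set"
    and \<mu> :: "(nat \<Rightarrow> 'a) measure"
  assumes shift: "is_shift L"
    and space: "space \<mu> = L"
    and borel: "sets \<mu> = sigma_sets L {U. openin (subtopology cantor_top L) U}"
    and prob: "prob_space \<mu>"
    and invariant: "\<forall>B\<in>sets \<mu>. emeasure \<mu> (shift_map -` B \<inter> L) = emeasure \<mu> B"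
    and nonatomic: "\<forall>w\<in>L. emeasure \<mu> {w} = 0"
    and regular: "regular_measure (subtopology cantor_top L) \<mu>"
    and pos_cyl: "\<forall>u. L \<inter> cyl u \<noteq> {} \<longrightarrow> emeasure \<mu> (L \<inter> cyl u) > 0"
  shows "distr \<mu> (restrict_space lborel {0..1}) (phi_mu L \<mu>) = restrict_space lborel {0..1}
    \<and> T_L L \<mu> \<in> measurable (restrict_space lborel {0..1}) (restrict_space lborel {0..1})
    \<and> (\<forall>B\<in>sets (restrict_space lborel {0..1::real}).
         emeasure lborel (T_L L \<mu> -` B \<inter> {0..1}) = emeasure lborel B)"
proof -
  have "shift_invariant_measure L \<mu>"
    using shift space borel prob invariant nonatomic pos_cyl
    by (simp add: shift_invariant_measure_def shift_invariant_measure_axioms_def lex_measure_def is_shift_def)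
  then interpret shift_invariant_measure L \<mu> .
  show ?thesis
    by (intro conjI ballI distr_phi T_L_measurable T_L_preserves_lebesgue)
qed

end
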